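(* Let $T>0$, $C_1>0$, and let $H:(0,1)^n\times\mathbb S(n)\to\mathbb R^n$, $B:(0,1)^n\times\mathbb S(n)\to\mathbb S(n)$ be $C^1$ with $H_i(\mu,p)\ge-C_1$ for all $(\mu,p)$ and $i$; let $g:[0,1]^n\to\mathbb R^n$, $\lambda\in[0,1]$, $t\in[0,T)$, $\mu\in\mathcal P_0(\mathbb G)$. If $(\phi,\rho):[t,T]\to\mathbb R^n\times(0,1)^n$ is a classical solution of $$\dot\phi=H(\rho,\lambda\nabla_{\mathbb G}\phi)-\Delta_{\mathbb G}\phi,\quad\dot\rho=\nabla_{\mathbb G}\cdot B(\rho,\lambda\nabla_{\mathbb G}\phi)+\Delta_{\mathbb G}\rho\ \text{ on }(t,T),\quad\phi(T)=g(\rho(T)),\ \rho(t)=\mu,$$ then $\max_{1\le i\le n}\phi_i(s)\le C_1(T-s)+\max_{1\le i\le n}\phi_i(T)$ for all $s\in[t,T]$.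
   Context: $\mathbb G$: finite connected simple undirected graph on $\{1,\dots,n\}$ with symmetric edge weights $\omega_{ij}>0$ iff $(i,j)\in\mathbb E$. $\mathbb S(n)$: skew-symmetric matrices. $(\nabla_{\mathbb G}u)^{ij}=\sqrt{\omega_{ij}}(u^i-u^j)$, $(\nabla_{\mathbb G}\cdot m)^i=\sum_{j\ne i}\sqrt{\omega_{ij}}m^{ji}$, $(\Delta_{\mathbb G}u)^i=\sum_j\omega_{ij}(u^j-u^i)$. $\mathcal P_0(\mathbb G)$: probability vectors with positive entries. Classical solution: a $C^1$ pair satisfying the system pointwise. *)

theory Defs
  imports "HOL-Analysis.Analysis"
begin

text \<open>Vertices of the graph are the elements of the finite type 'n (playing the role of {1..n}).
  Edge weights are a matrix w with w i j > 0 iff (i,j) is an edge, w i j = 0 otherwise.\<close>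

definition weighted_graph :: "real^'n^'n \<Rightarrow> bool" where
  "weighted_graph w \<longleftrightarrow>
     (\<forall>i j. w$i$j = w$j$i) \<and> (\<forall>i j. w$i$j \<ge> 0) \<and> (\<forall>i. w$i$i = 0) \<and>
     (\<forall>i::'n. ({(a,b). w$a$b > 0})\<^sup>* `` {i} = UNIV)"

definition skew_mats :: "(real^'n^'n) set" where
  "skew_mats = {A. transpose A = - A}"

definition grad_G :: "real^'n^'n \<Rightarrow> real^'n \<Rightarrow> real^'n^'n" where
  "grad_G w u = (\<chi> i j. sqrt (w$i$j) * (u$i - u$j))"

definition div_G :: "real^'n^'n \<Rightarrow> real^'n^'n \<Rightarrow> real^'n" where
  "div_G w m = (\<chi> i. \<Sum>j\<in>UNIV - {i}. sqrt (w$i$j) * m$j$i)"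

definition lap_G :: "real^'n^'n \<Rightarrow> real^'n \<Rightarrow> real^'n" where
  "lap_G w u = (\<chi> i. \<Sum>j\<in>UNIV. w$i$j * (u$j - u$i))"

definition P0 :: "(real^'n) set" where
  "P0 = {m. (\<forall>i. m$i > 0) \<and> (\<Sum>i\<in>UNIV. m$i) = 1}"

definition C1_on :: "'a::real_normed_vector set \<Rightarrow> ('a \<Rightarrow> 'b::real_normed_vector) \<Rightarrow> bool" where
  "C1_on S f \<longleftrightarrow> (\<exists>f'::'a \<Rightarrow> 'a \<Rightarrow>\<^sub>L 'b.
      (\<forall>x\<in>S. (f has_derivative blinfun_apply (f' x)) (at x within S)) \<and> continuous_on S f')"

definition classical_solution ::
  "real^'n^'n \<Rightarrow> (real^'n \<Rightarrow> real^'n^'n \<Rightarrow> real^'n) \<Rightarrow> (real^'n \<Rightarrow> real^'n^'n \<Rightarrow> real^'n^'n)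
   \<Rightarrow> (real^'n \<Rightarrow> real^'n) \<Rightarrow> real \<Rightarrow> real \<Rightarrow> real \<Rightarrow> real^'n
   \<Rightarrow> (real \<Rightarrow> real^'n) \<Rightarrow> (real \<Rightarrow> real^'n) \<Rightarrow> bool" where
  "classical_solution w H B g lam t T mu phi rho \<longleftrightarrow>
     C1_on {t..T} phi \<and> C1_on {t..T} rho \<and>
     (\<forall>s\<in>{t..T}. rho s \<in> box 0 1) \<and>
     (\<forall>s\<in>{t<..<T}.
        (phi has_vector_derivative (H (rho s) (lam *\<^sub>R grad_G w (phi s)) - lap_G w (phi s))) (at s) \<and>
        (rho has_vector_derivative (div_G w (B (rho s) (lam *\<^sub>R grad_G w (phi s))) + lap_G w (rho s))) (at s)) \<and>
     phi T = g (rho T) \<and> rho t = mu"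

end

theory Submission
  imports Defs
begin

text \<open>A maximum principle for the first equation alone: at a time where the component
  \<open>\<phi>\<^sub>i\<close> is maximal, the graph Laplacian of \<open>\<phi>\<close> is non-positive at \<open>i\<close>, so
  \<open>d\<phi>\<^sub>i/ds \<ge> -C\<^sub>1\<close> by the lower bound on \<open>H\<close>. Hence every component of
  \<open>s \<mapsto> \<phi>(s) - C\<^sub>1 (T - s)\<close> has non-negative derivative wherever it is the largest one, and a
  family of continuous functions with this property is bounded on \<open>[t, T]\<close> by the maximum
  of its values at \<open>T\<close>. The density \<open>\<rho>\<close> enters only through \<open>\<rho>(s) \<in> (0,1)\<^sup>n\<close>.\<close>

lemma finite_family_attains_max:
  fixes f :: "'i::finite \<Rightarrow> real \<Rightarrow> real"
  assumes "a \<le> b" and "\<And>i. continuous_on {a..b} (f i)"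
  obtains i s where "s \<in> {a..b}" and "\<And>k y. y \<in> {a..b} \<Longrightarrow> f k y \<le> f i s"
proof -
  have "\<forall>i. \<exists>s\<in>{a..b}. \<forall>y\<in>{a..b}. f i y \<le> f i s"
    using continuous_attains_sup[OF compact_Icc _ assms(2)] assms(1) by auto
  then obtain sm where sm: "\<And>i. sm i \<in> {a..b}" "\<And>i y. y \<in> {a..b} \<Longrightarrow> f i y \<le> f i (sm i)"
    by metis
  define m where "m = Max (range (\<lambda>k. f k (sm k)))"
  have "m \<in> range (\<lambda>k. f k (sm k))"
    unfolding m_def by (intro Max_in) auto
  then obtain i where i: "f i (sm i) = m" by auto
  have "f k (sm k) \<le> m" for k
    unfolding m_def by (intro Max_ge) auto
  then have "f k y \<le> f i (sm i)" if "y \<in> {a..b}" for k y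
    using sm(2)[OF that, of k] i by (meson order_trans)
  with sm(1) that show ?thesis by blast
qed

lemma DERIV_nonpos_at_right_max:
  fixes f :: "real \<Rightarrow> real"
  assumes "(f has_real_derivative l) (at x)" and "x < b" and "\<And>y. y \<in> {x..b} \<Longrightarrow> f y \<le> f x"
  shows "l \<le> 0"
proof (rule ccontr)
  assume "\<not> l \<le> 0"
  then obtain d where "d > 0" and inc: "\<And>h. h > 0 \<Longrightarrow> h < d \<Longrightarrow> f x < f (x + h)"
    using DERIV_pos_inc_right[OF assms(1)] by force
  define h where "h = min d (b - x) / 2"
  have "h > 0" "h < d" "x + h \<in> {x..b}"
    using \<open>d > 0\<close> \<open>x < b\<close> unfolding h_def by (auto simp: min_def field_simps)
  then show False using inc assms(3) by fastforce
qed

lemma family_le_final_value_right_open: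
  fixes f :: "'i::finite \<Rightarrow> real \<Rightarrow> real"
  assumes "a \<le> b" and "\<And>i. continuous_on {a..b} (f i)"
    and deriv: "\<And>s i. s \<in> {a..<b} \<Longrightarrow> (\<forall>j. f j s \<le> f i s) \<Longrightarrow>
                  \<exists>l>0. (f i has_real_derivative l) (at s)"
    and final: "\<And>k. f k b \<le> K"
    and "y \<in> {a..b}"
  shows "f j y \<le> K"
proof -
  obtain i s where s: "s \<in> {a..b}" and max: "\<And>k y. y \<in> {a..b} \<Longrightarrow> f k y \<le> f i s"
    by (metis finite_family_attains_max[of a b f, OF assms(1,2)])
  have "s = b"
  proof (rule ccontr)
    assume "s \<noteq> b"
    with s have "s \<in> {a..<b}" by auto
    moreover from this have "\<forall>k. f k s \<le> f i s" using max by auto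
    ultimately obtain l where "l > 0" "(f i has_real_derivative l) (at s)"
      using deriv by blast
    moreover have "l \<le> 0"
      using DERIV_nonpos_at_right_max[OF \<open>(f i has_real_derivative l) (at s)\<close>]
        \<open>s \<in> {a..<b}\<close> max s by auto
    ultimately show False by simp
  qed
  then show ?thesis using max[OF \<open>y \<in> {a..b}\<close>, of j] final[of i] by simp
qed

lemma family_le_final_value_open:
  fixes f :: "'i::finite \<Rightarrow> real \<Rightarrow> real"
  assumes "a \<le> b" and cont: "\<And>i. continuous_on {a..b} (f i)"
    and deriv: "\<And>s i. s \<in> {a<..<b} \<Longrightarrow> (\<forall>j. f j s \<le> f i s) \<Longrightarrow>
                  \<exists>l>0. (f i has_real_derivative l) (at s)"
    and final: "\<And>k. f k b \<le> K"
    and y: "y \<in> {a..b}"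
  shows "f j y \<le> K"
proof -
  have interior: "f j x \<le> K" if x: "x \<in> {a<..b}" for x
  proof (rule family_le_final_value_right_open[of x b f])
    show "x \<le> b" "x \<in> {x..b}" using x by auto
    show "continuous_on {x..b} (f i)" for i
      using x by (intro continuous_on_subset[OF cont]) auto
    show "f k b \<le> K" for k by (rule final)
    show "\<exists>l>0. (f i has_real_derivative l) (at s)"
      if "s \<in> {x..<b}" and "\<forall>j. f j s \<le> f i s" for s i
    proof -
      from that(1) x have "s \<in> {a<..<b}" by auto
      then show ?thesis using deriv that(2) by blast
    qed
  qed
  show ?thesis
  proof (cases "y = a \<and> a < b")
    case True
    have "(f j \<longlongrightarrow> f j a) (at a within {a..b})"
      using cont[of j] \<open>a \<le> b\<close> unfolding continuous_on_def by auto
    moreover have "\<forall>\<^sub>F x in at a within {a..b}. f j x \<le> K"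
      unfolding eventually_at_filter by (intro always_eventually) (auto intro: interior)
    moreover have "at a within {a..b} \<noteq> bot"
      using True by (simp add: trivial_limit_within)
    ultimately show ?thesis using True tendsto_upperbound by blast
  next
    case False
    then show ?thesis using y interior final[of j] by (cases "y = b") auto
  qed
qed

lemma family_le_final_value:
  fixes f :: "'i::finite \<Rightarrow> real \<Rightarrow> real"
  assumes "a \<le> b" and cont: "\<And>i. continuous_on {a..b} (f i)"
    and deriv: "\<And>s i. s \<in> {a<..<b} \<Longrightarrow> (\<forall>j. f j s \<le> f i s) \<Longrightarrow>
                  \<exists>l\<ge>0. (f i has_real_derivative l) (at s)"
    and final: "\<And>k. f k b \<le> K"
    and y: "y \<in> {a..b}"
  shows "f j y \<le> K"
proof (rule field_le_epsilon)
  fix e :: real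
  assume "e > 0"
  define c where "c = e / (b - a + 1)"
  have "c > 0" "c * (b - a) \<le> e"
    using \<open>a \<le> b\<close> \<open>e > 0\<close> unfolding c_def by (auto simp: field_simps)
  define g where "g k x = f k x + c * (x - b)" for k x
  have "g j y \<le> K"
  proof (rule family_le_final_value_open[where f = g])
    show "a \<le> b" "y \<in> {a..b}" by fact+
    show "continuous_on {a..b} (g k)" for k
      unfolding g_def by (intro continuous_intros cont)
    show "g k b \<le> K" for k
      using final by (simp add: g_def)
    show "\<exists>l>0. (g i has_real_derivative l) (at s)"
      if s: "s \<in> {a<..<b}" and g_max: "\<forall>j. g j s \<le> g i s" for s i
    proof -
      have "\<forall>j. f j s \<le> f i s" using g_max unfolding g_def by auto
      then obtain l where "l \<ge> 0" "(f i has_real_derivative l) (at s)"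
        using deriv[OF s] by blast
      then have "(g i has_real_derivative l + c) (at s)"
        unfolding g_def by (auto intro!: derivative_eq_intros)
      with \<open>l \<ge> 0\<close> \<open>c > 0\<close> show ?thesis by (intro exI[of _ "l + c"]) auto
    qed
  qed
  moreover have "c * (b - y) \<le> c * (b - a)"
    using y \<open>c > 0\<close> by (intro mult_left_mono) auto
  ultimately show "f j y \<le> K + e"
    using \<open>c * (b - a) \<le> e\<close> unfolding g_def by argo
qed

lemma lap_G_nonpos_at_max:
  assumes "\<And>i j. 0 \<le> w$i$j" and "\<And>j. u$j \<le> u$i"
  shows "lap_G w u $ i \<le> 0"
  unfolding lap_G_def using assms by (auto intro!: sum_nonpos mult_nonneg_nonpos)

lemma grad_G_in_skew_mats:
  assumes "\<And>i j. w$i$j = w$j$i"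
  shows "grad_G w u \<in> skew_mats"
  unfolding skew_mats_def grad_G_def transpose_def using assms
  by (simp add: vec_eq_iff algebra_simps)

lemma scaleR_in_skew_mats: "A \<in> skew_mats \<Longrightarrow> c *\<^sub>R A \<in> skew_mats"
  unfolding skew_mats_def by (simp add: transpose_scalar)

lemma C1_on_imp_continuous_on: "C1_on S f \<Longrightarrow> continuous_on S f"
  unfolding C1_on_def
  using has_derivative_continuous continuous_on_eq_continuous_within by blast

lemma has_real_derivative_vec_nth:
  "(f has_vector_derivative v) F \<Longrightarrow> ((\<lambda>x. f x $ i) has_real_derivative v $ i) F"
  using bounded_linear.has_vector_derivative[OF bounded_linear_vec_nth]
  by (simp add: has_real_derivative_iff_has_vector_derivative)

lemma classical_solution_deriv_ge_at_max_component:
  assumes "weighted_graph w"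
    and H_lower: "\<forall>x\<in>box 0 1. \<forall>p\<in>skew_mats. \<forall>i. H x p $ i \<ge> - C1"
    and sol: "classical_solution w H B g lam t T mu phi rho"
    and s: "s \<in> {t<..<T}" and max: "\<forall>j. phi s $ j \<le> phi s $ i"
  shows "\<exists>l\<ge>-C1. ((\<lambda>x. phi x $ i) has_real_derivative l) (at s)"
proof -
  define p where "p = lam *\<^sub>R grad_G w (phi s)"
  have "p \<in> skew_mats"
    using \<open>weighted_graph w\<close> unfolding p_def weighted_graph_def
    by (intro scaleR_in_skew_mats grad_G_in_skew_mats) auto
  moreover have "rho s \<in> box 0 1" using sol s unfolding classical_solution_def by auto
  ultimately have "H (rho s) p $ i \<ge> - C1" using H_lower by blast
  moreover have "lap_G w (phi s) $ i \<le> 0"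
    using \<open>weighted_graph w\<close> max unfolding weighted_graph_def
    by (intro lap_G_nonpos_at_max) auto
  moreover have "((\<lambda>x. phi x $ i) has_real_derivative (H (rho s) p - lap_G w (phi s)) $ i) (at s)"
    using sol s unfolding classical_solution_def p_def by (blast intro: has_real_derivative_vec_nth)
  ultimately show ?thesis by (intro exI[of _ "(H (rho s) p - lap_G w (phi s)) $ i"]) auto
qed

theorem lemma3p2:
  fixes w :: "real^'n^'n"
    and H :: "real^'n \<Rightarrow> real^'n^'n \<Rightarrow> real^'n"
    and B :: "real^'n \<Rightarrow> real^'n^'n \<Rightarrow> real^'n^'n"
    and g :: "real^'n \<Rightarrow> real^'n"
    and T C1 lam t :: real and mu :: "real^'n"
    and phi rho :: "real \<Rightarrow> real^'n"
  assumes "weighted_graph w"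
    and "T > 0" and "C1 > 0"
    and "C1_on (box 0 1 \<times> skew_mats) (\<lambda>(x, p). H x p)"
    and "C1_on (box 0 1 \<times> skew_mats) (\<lambda>(x, p). B x p)"
    and "\<forall>x\<in>box 0 1. \<forall>p\<in>skew_mats. B x p \<in> skew_mats"
    and "\<forall>x\<in>box 0 1. \<forall>p\<in>skew_mats. \<forall>i. H x p $ i \<ge> - C1"
    and "0 \<le> lam" and "lam \<le> 1"
    and "0 \<le> t" and "t < T"
    and "mu \<in> P0"
    and "classical_solution w H B g lam t T mu phi rho"
  shows "\<forall>s\<in>{t..T}. Max (range (\<lambda>i. phi s $ i)) \<le> C1 * (T - s) + Max (range (\<lambda>i. phi T $ i))"
proof
  fix s assume s: "s \<in> {t..T}"
  define M where "M = Max (range (\<lambda>i. phi T $ i))"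
  have "continuous_on {t..T} phi"
    using assms(13) unfolding classical_solution_def by (blast intro: C1_on_imp_continuous_on)
  have bound: "phi s $ j - C1 * (T - s) \<le> M" for j
  proof (rule family_le_final_value[where f = "\<lambda>k x. phi x $ k - C1 * (T - x)"])
    show "continuous_on {t..T} (\<lambda>x. phi x $ k - C1 * (T - x))" for k
      using \<open>continuous_on {t..T} phi\<close> by (intro continuous_intros)
    show "\<exists>l\<ge>0. ((\<lambda>x. phi x $ i - C1 * (T - x)) has_real_derivative l) (at x)"
      if x: "x \<in> {t<..<T}" and "\<forall>k. phi x $ k - C1 * (T - x) \<le> phi x $ i - C1 * (T - x)" for x i
    proof -
      have "\<forall>k. phi x $ k \<le> phi x $ i" using that(2) by auto
      then obtain l where "l \<ge> - C1" "((\<lambda>x. phi x $ i) has_real_derivative l) (at x)"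
        using classical_solution_deriv_ge_at_max_component[OF assms(1,7,13) x] by blast
      then show ?thesis by (intro exI[of _ "l + C1"]) (auto intro!: derivative_eq_intros)
    qed
  qed (use s assms(11) M_def in auto)
  then have "phi s $ j \<le> C1 * (T - s) + M" for j
    using bound[of j] by linarith
  then show "Max (range (\<lambda>i. phi s $ i)) \<le> C1 * (T - s) + M" by (subst Max_le_iff) auto
qed

end
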